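(* There is an absolute constant $C>0$ such that the following holds. Let $p$ be a prime and $n:=p^3$. Let $s_0,\dots,s_{n-1}\in[0,1)$ be such that $Q_{0,3}(x)=\sum_{j=0}^{n-1}e^{2\pi\imath s_j}x^j$. Then for every $t\in\mathbb{R}$, $$B(s_0,\,s_1+t,\,s_2+2t,\dots,s_{n-1}+(n-1)t)\ \le\ C\,n^{2/3}\log n.$$
   Context: Fix a prime $p$ and a primitive $p$-th root of unity $\xi$. Let $D$ be the $p\times p$ matrix $D_{j,l}=\xi^{jl}$, $j,l\in\{0,\dots,p-1\}$. Define polynomials $Q_{0,r},\dots,Q_{p-1,r}\in\mathbb{C}[x]$ recursively: $Q_{j,0}:=1$ for all $j$, and for $r\ge0$, $$(Q_{0,r+1},\dots,Q_{p-1,r+1})^T:=D\cdot\big(Q_{0,r},\,x^{p^r}Q_{1,r},\dots,x^{(p-1)p^r}Q_{p-1,r}\big)^T.$$ $Q_{0,3}$ has degree $p^3-1$ and all coefficients of absolute value $1$. For $r\in\mathbb{R}$, $\{r\}:=r-\lfloor r\rfloor$; the bias of $r_1,\dots,r_N$ is $B(r_1,\dots,r_N):=\sup_{0\le a\le b\le1}\big|\,|\{i:\{r_i\}\in[a,b]\}|-N(b-a)\big|$. *)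

theory Defs
  imports "HOL-Analysis.Analysis" "HOL-Computational_Algebra.Polynomial"
begin

fun Qpoly :: "nat \<Rightarrow> complex \<Rightarrow> nat \<Rightarrow> nat \<Rightarrow> complex poly" where
  "Qpoly p \<xi> j 0 = 1"
| "Qpoly p \<xi> j (Suc r) =
     (\<Sum>l<p. smult (\<xi> ^ (j * l)) (monom 1 (l * p ^ r) * Qpoly p \<xi> l r))"

definition primitive_root_of_unity :: "nat \<Rightarrow> complex \<Rightarrow> bool" where
  "primitive_root_of_unity p \<xi> \<longleftrightarrow> \<xi> ^ p = 1 \<and> (\<forall>k. 0 < k \<and> k < p \<longrightarrow> \<xi> ^ k \<noteq> 1)"

definition frac_part :: "real \<Rightarrow> real" where
  "frac_part r = r - of_int \<lfloor>r\<rfloor>"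

definition bias :: "nat \<Rightarrow> (nat \<Rightarrow> real) \<Rightarrow> real" where
  "bias N r = (SUP ab \<in> {(a, b). 0 \<le> a \<and> a \<le> b \<and> b \<le> (1::real)}.
      \<bar>real (card {i. i < N \<and> frac_part (r i) \<in> {fst ab..snd ab}}) - real N * (snd ab - fst ab)\<bar>)"

end

theory Submission
  imports Defs
begin

text \<open>Write e(x) = exp(2 pi i x). Smoothing the indicator of an arc by Fejer kernels of order H
  gives the Erdos--Turan inequality: the discrepancy of N points x_i is at most of the order
  N/H + sum_{d=1}^H |sum_i e(d x_i)| / d. For x_j = s_j + j t write j = a + b p + c p^2 in base p;
  the coefficient of x^j in Q_{0,3} is xi^(cb + ba), so for p not dividing d the sum
  sum_j e(d x_j) factors as sum_b w^(bp) A_b C_b, where A_b and C_b are geometric sums of length p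
  with ratios zeta^b w and zeta^b w^(p^2) (zeta = xi^d, w = e(d t)). By AM-GM and Parseval over
  the p-th roots of unity zeta^b, this sum is at most p^2, while for p dividing d it is trivially at
  most p^3. With H = p^2 the Erdos--Turan bound becomes O(p^2 log p) = O(n^(2/3) log n).\<close>

definition e2pi :: "real \<Rightarrow> complex" where
  "e2pi x = cis (2 * pi * x)"

lemma e2pi_add: "e2pi (a + b) = e2pi a * e2pi b"
  by (simp add: e2pi_def cis_mult distrib_left)

lemma norm_e2pi [simp]: "norm (e2pi x) = 1"
  by (simp add: e2pi_def)

lemma e2pi_Ints: "x \<in> \<int> \<Longrightarrow> e2pi x = 1"
  by (simp add: e2pi_def)

lemma e2pi_0 [simp]: "e2pi 0 = 1"
  by (simp add: e2pi_def)

lemma e2pi_of_int [simp]: "e2pi (of_int m) = 1"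
  by (simp add: e2pi_Ints)

lemma e2pi_power: "e2pi x ^ n = e2pi (real n * x)"
proof -
  have "e2pi x ^ n = cis (real n * (2 * pi * x))"
    unfolding e2pi_def by (rule Complex.DeMoivre)
  then show ?thesis by (simp add: e2pi_def algebra_simps)
qed

lemma e2pi_minus: "e2pi (- x) = cnj (e2pi x)"
  by (simp add: e2pi_def cis_cnj)

lemma e2pi_diff: "e2pi (a - b) = e2pi a * cnj (e2pi b)"
  using e2pi_add[of a "- b"] by (simp add: e2pi_minus)

lemma e2pi_add_Ints: "m \<in> \<int> \<Longrightarrow> e2pi (x + m) = e2pi x"
  by (simp add: e2pi_add e2pi_Ints)

lemma sin_pi_ge_self:
  assumes "0 \<le> x" "x \<le> 1/2"
  shows "x \<le> sin (pi * x)"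
proof -
  have "\<bar>sin (pi * x) - (\<Sum>m<3. sin_coeff m * (pi * x) ^ m)\<bar> \<le> inverse (fact 3) * \<bar>pi * x\<bar> ^ 3"
    by (rule Maclaurin_sin_bound)
  moreover have "(\<Sum>m<3. sin_coeff m * (pi * x) ^ m) = pi * x"
    by (simp add: sin_coeff_def eval_nat_numeral)
  moreover have "inverse (fact 3) * \<bar>pi * x\<bar> ^ 3 = (pi * x) ^ 3 / 6"
    using assms by (simp add: fact_numeral)
  moreover have "x \<le> pi * x - (pi * x) ^ 3 / 6"
  proof -
    have y0: "0 \<le> pi * x" using assms by simp
    have "pi * x \<le> 4 * x" using mult_right_mono[OF less_imp_le[OF pi_less_4] assms(1)] .
    then have "(pi * x)\<^sup>2 \<le> 2\<^sup>2" using assms y0 by (intro power_mono) auto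
    then have "(pi * x) ^ 3 \<le> 4 * (pi * x)"
      using mult_right_mono[OF _ y0, of "(pi * x)\<^sup>2" 4] by (simp add: power3_eq_cube power2_eq_square)
    moreover have "3 * x \<le> pi * x" using mult_right_mono[OF less_imp_le[OF pi_gt3] assms(1)] .
    ultimately show ?thesis by linarith
  qed
  ultimately show ?thesis
    by (simp only: abs_le_iff) linarith
qed

lemma abs_sin_pi_ge_abs: "\<bar>x\<bar> \<le> 1/2 \<Longrightarrow> \<bar>x\<bar> \<le> \<bar>sin (pi * x)\<bar>"
  using sin_pi_ge_self[of x] sin_pi_ge_self[of "- x"] by (cases "x \<ge> 0") auto

lemma sin_pi_ge_min:
  assumes "0 < y" "y < 1"
  shows "min y (1 - y) \<le> sin (pi * y)"
proof (cases "y \<le> 1/2")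
  case True
  then show ?thesis using sin_pi_ge_self[of y] assms by auto
next
  case False
  have "sin (pi * y) = sin (pi * (1 - y))" by (simp add: algebra_simps sin_diff)
  then show ?thesis using sin_pi_ge_self[of "1 - y"] assms False by auto
qed

lemma norm_one_minus_e2pi: "norm (1 - e2pi x) = 2 * \<bar>sin (pi * x)\<bar>"
proof -
  have "(norm (1 - e2pi x))\<^sup>2 = (1 - cos (2 * pi * x))\<^sup>2 + (sin (2 * pi * x))\<^sup>2"
    by (simp add: e2pi_def cmod_power2 cis.ctr)
  also have "\<dots> = 2 - 2 * cos (2 * pi * x)"
    by (simp add: power2_eq_square algebra_simps)
  also have "cos (2 * pi * x) = 1 - 2 * (sin (pi * x))\<^sup>2"
    using cos_double_sin[of "pi * x"] by (simp add: mult.assoc)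
  finally have "(norm (1 - e2pi x))\<^sup>2 = (2 * \<bar>sin (pi * x)\<bar>)\<^sup>2"
    by (simp add: power_mult_distrib)
  then show ?thesis
    using power2_eq_iff_nonneg[of "norm (1 - e2pi x)" "2 * \<bar>sin (pi * x)\<bar>"] by simp
qed

lemma norm_one_minus_e2pi_ge: "\<bar>x\<bar> \<le> 1/2 \<Longrightarrow> 2 * \<bar>x\<bar> \<le> norm (1 - e2pi x)"
  using abs_sin_pi_ge_abs by (simp add: norm_one_minus_e2pi)

lemma norm_geometric_sum_le:
  fixes z :: complex
  assumes "z \<noteq> 1" "norm z = 1"
  shows "norm (\<Sum>r<R. z ^ r) \<le> 2 / norm (1 - z)"
proof -
  have "norm (\<Sum>r<R. z ^ r) = norm (1 - z ^ R) / norm (1 - z)"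
    using assms(1) by (simp add: sum_gp_strict norm_divide)
  also have "norm (1 - z ^ R) \<le> 2"
    using norm_triangle_ineq4[of 1 "z ^ R"] assms(2) by (simp add: norm_power)
  finally show ?thesis by (simp add: divide_right_mono)
qed

lemma norm_sum_e2pi_power_le:
  assumes "0 < \<bar>t\<bar>" "\<bar>t\<bar> \<le> 1/2"
  shows "norm (\<Sum>r<R. e2pi t ^ r) \<le> 1 / \<bar>t\<bar>"
proof -
  have lower: "2 * \<bar>t\<bar> \<le> norm (1 - e2pi t)"
    using assms(2) by (rule norm_one_minus_e2pi_ge)
  then have pos: "0 < norm (1 - e2pi t)" using assms(1) by linarith
  then have "norm (\<Sum>r<R. e2pi t ^ r) \<le> 2 / norm (1 - e2pi t)"
    by (intro norm_geometric_sum_le) auto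
  also have "\<dots> \<le> 2 / (2 * \<bar>t\<bar>)"
    using lower pos assms(1) by (intro divide_left_mono) auto
  finally show ?thesis by simp
qed

lemma sum_e2pi_power_frac:
  fixes k H :: int
  assumes "\<bar>k\<bar> \<le> H" "2 * H < L"
  shows "(\<Sum>r<L. e2pi (of_int k / real L) ^ r) = (if k = 0 then of_nat L else 0)"
proof (cases "k = 0")
  case True
  then show ?thesis by simp
next
  case False
  have "real_of_int (2 * \<bar>k\<bar>) \<le> real_of_int (int L)"
    by (simp only: of_int_le_iff) (use assms in linarith)
  then have "2 * \<bar>of_int k / real L\<bar> \<le> 1" and L: "real L > 0"
    using False by (auto simp: field_simps)
  then have "2 * \<bar>of_int k / real L\<bar> \<le> norm (1 - e2pi (of_int k / real L))"
    by (intro norm_one_minus_e2pi_ge) simp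
  moreover have "0 < \<bar>of_int k / real L\<bar>" using False L by simp
  ultimately have "e2pi (of_int k / real L) \<noteq> 1" by auto
  moreover have "e2pi (of_int k / real L) ^ L = 1" using L by (simp add: e2pi_power)
  ultimately show ?thesis using False by (simp add: sum_gp_strict)
qed

lemma norm_window_sum_le:
  assumes "0 < \<bar>k\<bar>" "2 * \<bar>k\<bar> \<le> real L"
  shows "norm (\<Sum>r<R. e2pi (k * (v - real r / real L))) \<le> real L / \<bar>k\<bar>"
proof -
  have L: "real L > 0" using assms by linarith
  have "(\<Sum>r<R. e2pi (k * (v - real r / real L))) = e2pi (k * v) * (\<Sum>r<R. e2pi (- k / real L) ^ r)"
    unfolding sum_distrib_left e2pi_power e2pi_add[symmetric] by (simp add: algebra_simps)
  then have "norm (\<Sum>r<R. e2pi (k * (v - real r / real L))) = norm (\<Sum>r<R. e2pi (- k / real L) ^ r)"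
    by (simp add: norm_mult)
  also have "\<dots> \<le> 1 / \<bar>- k / real L\<bar>"
    by (rule norm_sum_e2pi_power_le) (use assms L in \<open>auto simp: field_simps\<close>)
  also have "\<dots> = real L / \<bar>k\<bar>" using L by simp
  finally show ?thesis .
qed

section \<open>The Fejer kernel\<close>

definition fejer :: "nat \<Rightarrow> real \<Rightarrow> real" where
  "fejer H x = (norm (\<Sum>j<Suc H. e2pi (real j * x)))\<^sup>2 / real (Suc H)"

lemma fejer_nonneg: "0 \<le> fejer H x"
  by (simp add: fejer_def)

lemma fejer_le:
  assumes "sin (pi * x) \<noteq> 0"
  shows "fejer H x \<le> 1 / (real (Suc H) * (sin (pi * x))\<^sup>2)"
proof -
  have "e2pi x \<noteq> 1" using assms norm_one_minus_e2pi[of x] by auto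
  then have "norm (\<Sum>j<Suc H. e2pi (real j * x)) \<le> 2 / norm (1 - e2pi x)"
    using norm_geometric_sum_le[of "e2pi x" "Suc H"] by (simp add: e2pi_power)
  also have "\<dots> = 1 / \<bar>sin (pi * x)\<bar>" by (simp add: norm_one_minus_e2pi)
  finally have "(norm (\<Sum>j<Suc H. e2pi (real j * x)))\<^sup>2 \<le> (1 / \<bar>sin (pi * x)\<bar>)\<^sup>2"
    by (intro power_mono) auto
  then have "fejer H x \<le> (1 / \<bar>sin (pi * x)\<bar>)\<^sup>2 / real (Suc H)"
    unfolding fejer_def by (rule divide_right_mono) auto
  then show ?thesis by (simp add: power_one_over mult.commute)
qed

lemma of_real_fejer:
  "complex_of_real (fejer H x) =
     (\<Sum>j<Suc H. \<Sum>j'<Suc H. e2pi ((real j - real j') * x)) / of_nat (Suc H)"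
proof -
  let ?s = "\<Sum>j<Suc H. e2pi (real j * x)"
  have "complex_of_real ((norm ?s)\<^sup>2) = ?s * cnj ?s" by (rule complex_norm_square)
  also have "\<dots> = (\<Sum>j<Suc H. \<Sum>j'<Suc H. e2pi (real j * x) * cnj (e2pi (real j' * x)))"
    unfolding cnj_sum sum_product ..
  also have "\<dots> = (\<Sum>j<Suc H. \<Sum>j'<Suc H. e2pi ((real j - real j') * x))"
    by (simp add: e2pi_diff[symmetric] left_diff_distrib)
  finally show ?thesis unfolding fejer_def by simp
qed

lemma fejer_add_Ints: "m \<in> \<int> \<Longrightarrow> fejer H (x + m) = fejer H x"
  unfolding fejer_def distrib_left by (simp add: e2pi_add_Ints)

text \<open>Orthogonality of the characters e(k r / L) for |k| \<le> H < L / 2.\<close>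

lemma sum_fejer_shifts:
  assumes "2 * H < L"
  shows "(\<Sum>r<L. fejer H (x - real r / real L)) = real L"
proof -
  have shift: "e2pi ((real j - real j') * (x - real r / real L)) =
      e2pi ((real j - real j') * x) * e2pi ((real j' - real j) / real L) ^ r" for j j' r
  proof -
    have "(real j - real j') * (x - real r / real L)
        = (real j - real j') * x + real r * ((real j' - real j) / real L)"
      by (simp add: algebra_simps diff_divide_distrib)
    then show ?thesis by (simp only: e2pi_add e2pi_power)
  qed
  have orth: "(\<Sum>r<L. e2pi ((real j' - real j) / real L) ^ r) = (if j' = j then of_nat L else 0)"
    if "j < Suc H" "j' < Suc H" for j j'
    using sum_e2pi_power_frac[of "int j' - int j" "int H" L] that assms by auto
  have "(\<Sum>r<L. \<Sum>j<Suc H. \<Sum>j'<Suc H. e2pi ((real j - real j') * (x - real r / real L)))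
      = (\<Sum>j<Suc H. \<Sum>j'<Suc H. e2pi ((real j - real j') * x) *
          (\<Sum>r<L. e2pi ((real j' - real j) / real L) ^ r))"
    unfolding shift sum_distrib_left by (simp add: sum.swap[of _ "{..<L}"])
  also have "\<dots> = (\<Sum>j<Suc H. \<Sum>j'<Suc H. if j' = j then of_nat L else 0)"
    by (intro sum.cong refl) (auto simp: orth)
  also have "\<dots> = of_nat (Suc H) * of_nat L" by (simp add: algebra_simps)
  finally have "complex_of_real (\<Sum>r<L. fejer H (x - real r / real L)) = of_nat (Suc H) * of_nat L / of_nat (Suc H)"
    by (simp add: of_real_fejer sum_divide_distrib[symmetric])
  also have "\<dots> = complex_of_real (real L)"
    by (simp del: of_nat_Suc)
  finally show ?thesis by (simp only: of_real_eq_iff)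
qed

lemma inverse_square_le_telescope:
  assumes "real L * A \<ge> 1"
  shows "1 / (real L * A\<^sup>2) \<le> 2 / A - 2 / (A + 1 / real L)"
proof -
  have A: "A > 0"
  proof (rule ccontr)
    assume "\<not> A > 0"
    then have "real L * A \<le> 0" by (simp add: mult_nonneg_nonpos)
    with assms show False by linarith
  qed
  have L: "real L > 0" using assms by (cases "L = 0") auto
  define B where "B = A + 1 / real L"
  have B: "B > 0" "B - A = 1 / real L" unfolding B_def using A L by (simp_all add: add_pos_pos)
  have "2 / A - 2 / B = 2 * (B - A) / (A * B)" using A B by (simp add: field_simps)
  also have "\<dots> = 2 / (real L * A * B)" unfolding B(2) by simp
  also have "\<dots> \<ge> 2 / (real L * A * (2 * A))"
    using L A B assms unfolding B_def by (intro divide_left_mono mult_left_mono mult_pos_pos) (auto simp: field_simps)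
  finally show ?thesis
    unfolding B_def using L A by (simp add: power2_eq_square field_simps)
qed

lemma sum_inverse_square_shifts_le:
  assumes "\<delta> > 0" "real L * \<delta> \<ge> 1" "finite S" "inj_on f S"
  shows "(\<Sum>r\<in>S. 1 / (real L * (\<delta> + real (f r) / real L)\<^sup>2)) \<le> 2 / \<delta>"
proof -
  have L: "real L > 0" using assms by (cases "L = 0") auto
  have telescope: "(\<Sum>k<K. 1 / (real L * (\<delta> + real k / real L)\<^sup>2)) \<le> 2 / \<delta> - 2 / (\<delta> + real K / real L)" for K
  proof (induction K)
    case (Suc K)
    define A where "A = \<delta> + real K / real L"
    have "real L * A \<ge> 1"
      unfolding A_def using assms L by (simp add: distrib_left)
    then have "1 / (real L * A\<^sup>2) \<le> 2 / A - 2 / (A + 1 / real L)"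
      by (rule inverse_square_le_telescope)
    moreover have "A + 1 / real L = \<delta> + real (Suc K) / real L"
      unfolding A_def by (simp add: add_divide_distrib)
    ultimately have "1 / (real L * (\<delta> + real K / real L)\<^sup>2)
        \<le> 2 / (\<delta> + real K / real L) - 2 / (\<delta> + real (Suc K) / real L)"
      unfolding A_def by simp
    then show ?case using Suc.IH by simp
  qed simp
  obtain K where "f ` S \<subseteq> {..<K}" using assms(3) finite_nat_iff_bounded by auto
  have "(\<Sum>r\<in>S. 1 / (real L * (\<delta> + real (f r) / real L)\<^sup>2))
      = (\<Sum>k\<in>f ` S. 1 / (real L * (\<delta> + real k / real L)\<^sup>2))"
    using assms(4) by (simp add: sum.reindex)
  also have "\<dots> \<le> (\<Sum>k<K. 1 / (real L * (\<delta> + real k / real L)\<^sup>2))"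
    using \<open>f ` S \<subseteq> {..<K}\<close> by (intro sum_mono2) auto
  also have "\<dots> \<le> 2 / \<delta>"
  proof -
    have "0 \<le> 2 / (\<delta> + real K / real L)" using assms by simp
    then show ?thesis using telescope[of K] by linarith
  qed
  finally show ?thesis .
qed

lemma fejer_le_inverse_squares:
  assumes "d1 > 0" "d2 > 0" "y \<ge> d1" "1 - y \<ge> d2"
  shows "fejer H (- y) \<le> (1 / d1\<^sup>2 + 1 / d2\<^sup>2) / real (Suc H)"
proof -
  have m0: "0 < min y (1 - y)" using assms by auto
  have s: "min y (1 - y) \<le> sin (pi * y)" by (rule sin_pi_ge_min) (use assms in auto)
  have "fejer H (- y) \<le> 1 / (real (Suc H) * (sin (pi * y))\<^sup>2)"
    using fejer_le[of "- y" H] s m0 by simp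
  also have "\<dots> \<le> 1 / (real (Suc H) * (min y (1 - y))\<^sup>2)"
    using m0 s by (intro divide_left_mono mult_left_mono mult_pos_pos power_mono) auto
  also have "\<dots> \<le> (1 / d1\<^sup>2 + 1 / d2\<^sup>2) / real (Suc H)"
  proof -
    have inverse_square: "1 / z\<^sup>2 \<le> 1 / d\<^sup>2" if "0 < d" "d \<le> z" for d z :: real
      using that by (intro divide_left_mono power_mono mult_pos_pos) auto
    have "1 / (min y (1 - y))\<^sup>2 \<le> 1 / d1\<^sup>2 + 1 / d2\<^sup>2"
      using assms inverse_square[of d1 y] inverse_square[of d2 "1 - y"]
      by (cases "y \<le> 1 - y") (simp_all add: min_def add_increasing add_increasing2)
    then have "1 / (min y (1 - y))\<^sup>2 / real (Suc H) \<le> (1 / d1\<^sup>2 + 1 / d2\<^sup>2) / real (Suc H)"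
      by (rule divide_right_mono) simp
    then show ?thesis by (simp add: mult.commute)
  qed
  finally show ?thesis .
qed

text \<open>The shifts r/L with R \<le> r < L keep the kernel at distance at least \<delta> + (r - R)/L
  and \<delta> + (L - 1 - r)/L from the point x - (a - \<delta>), so their total mass is O(1/(H \<delta>)).\<close>

lemma fejer_tail_sum_le:
  assumes "\<delta> > 0" "real L * \<delta> \<ge> 1" "a \<le> x" "x \<le> b" "R \<le> L"
    "real R / real L \<ge> b - a + 2 * \<delta>"
  shows "(\<Sum>r\<in>{R..<L}. fejer H (x - (a - \<delta>) - real r / real L)) / real L \<le> 4 / (real (Suc H) * \<delta>)"
proof -
  have L: "real L > 0" using assms by (cases "L = 0") auto
  define w where "w k = 1 / (real L * (\<delta> + real k / real L)\<^sup>2)" for k :: nat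
  have pointwise: "fejer H (x - (a - \<delta>) - real r / real L) / real L \<le> (w (r - R) + w (L - 1 - r)) / real (Suc H)"
    if r: "r \<in> {R..<L}" for r
  proof -
    define y where "y = (a - \<delta>) + real r / real L - x"
    have "real (r - R) / real L = real r / real L - real R / real L"
      using r by (simp add: of_nat_diff diff_divide_distrib)
    then have d1: "y \<ge> \<delta> + real (r - R) / real L"
      unfolding y_def using assms by linarith
    have "real (L - 1 - r) / real L \<le> real (L - r) / real L"
      using L by (intro divide_right_mono) auto
    also have "real (L - r) / real L = 1 - real r / real L"
      using r L by (simp add: of_nat_diff diff_divide_distrib)
    finally have d2: "1 - y \<ge> \<delta> + real (L - 1 - r) / real L"
      unfolding y_def using assms by linarith
    have "fejer H (- y) \<le> (1 / (\<delta> + real (r - R) / real L)\<^sup>2 + 1 / (\<delta> + real (L - 1 - r) / real L)\<^sup>2) / real (Suc H)"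
      by (rule fejer_le_inverse_squares) (use d1 d2 assms in \<open>auto intro: add_pos_nonneg\<close>)
    moreover have "x - (a - \<delta>) - real r / real L = - y" unfolding y_def by simp
    ultimately show ?thesis
      unfolding w_def using L by (simp only:) (simp add: divide_right_mono field_simps del: of_nat_Suc)
  qed
  have w1: "(\<Sum>r\<in>{R..<L}. w (r - R)) \<le> 2 / \<delta>"
    unfolding w_def using assms by (intro sum_inverse_square_shifts_le) (auto simp: inj_on_def)
  have w2: "(\<Sum>r\<in>{R..<L}. w (L - 1 - r)) \<le> 2 / \<delta>"
    unfolding w_def using assms by (intro sum_inverse_square_shifts_le) (auto simp: inj_on_def)
  have "(\<Sum>r\<in>{R..<L}. fejer H (x - (a - \<delta>) - real r / real L)) / real L
      \<le> (\<Sum>r\<in>{R..<L}. (w (r - R) + w (L - 1 - r)) / real (Suc H))"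
    unfolding sum_divide_distrib by (intro sum_mono pointwise)
  also have "\<dots> = ((\<Sum>r\<in>{R..<L}. w (r - R)) + (\<Sum>r\<in>{R..<L}. w (L - 1 - r))) / real (Suc H)"
    by (simp only: sum_divide_distrib[symmetric] sum.distrib)
  also have "\<dots> \<le> (2 / \<delta> + 2 / \<delta>) / real (Suc H)"
    using w1 w2 by (intro divide_right_mono add_mono) auto
  also have "\<dots> = 4 / (real (Suc H) * \<delta>)"
    by simp
  finally show ?thesis .
qed

section \<open>The Erdos--Turan inequality\<close>

lemma sum_offdiag_dist_le:
  fixes f :: "nat \<Rightarrow> real"
  assumes f0: "\<And>d. d \<in> {1..H} \<Longrightarrow> 0 \<le> f d"
  shows "(\<Sum>j<Suc H. \<Sum>j'\<in>{..<Suc H} - {j}. f (if j \<le> j' then j' - j else j - j'))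
         \<le> 2 * real (Suc H) * (\<Sum>d\<in>{1..H}. f d)"
proof -
  have row: "(\<Sum>j'\<in>{..<Suc H} - {j}. f (if j \<le> j' then j' - j else j - j')) \<le> 2 * (\<Sum>d\<in>{1..H}. f d)"
    if j: "j < Suc H" for j
  proof -
    have split: "{..<Suc H} - {j} = {j'\<in>{..<Suc H}. j' < j} \<union> {j'\<in>{..<Suc H}. j < j'}" by auto
    have "(\<Sum>j'\<in>{..<Suc H} - {j}. f (if j \<le> j' then j' - j else j - j'))
        = (\<Sum>j'\<in>{j'\<in>{..<Suc H}. j' < j}. f (if j \<le> j' then j' - j else j - j'))
          + (\<Sum>j'\<in>{j'\<in>{..<Suc H}. j < j'}. f (if j \<le> j' then j' - j else j - j'))"
      unfolding split by (rule sum.union_disjoint) auto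
    also have "(\<Sum>j'\<in>{j'\<in>{..<Suc H}. j' < j}. f (if j \<le> j' then j' - j else j - j'))
        = (\<Sum>j'\<in>{j'\<in>{..<Suc H}. j' < j}. f (j - j'))"
      by (rule sum.cong) auto
    also have "(\<Sum>j'\<in>{j'\<in>{..<Suc H}. j < j'}. f (if j \<le> j' then j' - j else j - j'))
        = (\<Sum>j'\<in>{j'\<in>{..<Suc H}. j < j'}. f (j' - j))"
      by (rule sum.cong) auto
    also have "(\<Sum>j'\<in>{j'\<in>{..<Suc H}. j' < j}. f (j - j'))
        = (\<Sum>d\<in>(\<lambda>j'. j - j') ` {j'\<in>{..<Suc H}. j' < j}. f d)"
      by (subst sum.reindex) (auto simp: inj_on_def)
    also have "\<dots> \<le> (\<Sum>d\<in>{1..H}. f d)"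
      using j by (intro sum_mono2) (auto intro: f0)
    also have "(\<Sum>j'\<in>{j'\<in>{..<Suc H}. j < j'}. f (j' - j))
        = (\<Sum>d\<in>(\<lambda>j'. j' - j) ` {j'\<in>{..<Suc H}. j < j'}. f d)"
      by (subst sum.reindex) (auto simp: inj_on_def)
    also have "\<dots> \<le> (\<Sum>d\<in>{1..H}. f d)"
      by (intro sum_mono2) (auto intro: f0)
    finally show ?thesis by simp
  qed
  have "(\<Sum>j<Suc H. \<Sum>j'\<in>{..<Suc H} - {j}. f (if j \<le> j' then j' - j else j - j'))
      \<le> (\<Sum>j<Suc H. 2 * (\<Sum>d\<in>{1..H}. f d))"
    by (intro sum_mono row) auto
  also have "\<dots> = 2 * real (Suc H) * (\<Sum>d\<in>{1..H}. f d)"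
    by (simp only: sum_constant card_lessThan mult_ac)
  finally show ?thesis .
qed

lemma norm_sum_e2pi_diff_le:
  assumes SB: "\<And>d. 1 \<le> d \<Longrightarrow> d \<le> H \<Longrightarrow> norm (\<Sum>i<N. e2pi (real d * x i)) \<le> G d"
    and j: "j < Suc H" "j' < Suc H" "j \<noteq> j'"
  shows "norm (\<Sum>i<N. e2pi ((real j - real j') * x i)) \<le> G (if j \<le> j' then j' - j else j - j')"
proof (cases "j \<le> j'")
  case True
  then have diff: "real j - real j' = - real (j' - j)" by (simp add: of_nat_diff)
  have "norm (\<Sum>i<N. e2pi ((real j - real j') * x i)) = norm (\<Sum>i<N. e2pi (real (j' - j) * x i))"
    unfolding diff mult_minus_left e2pi_minus cnj_sum[symmetric] complex_mod_cnj ..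
  then show ?thesis using SB[of "j' - j"] True j by simp
next
  case False
  then have diff: "real j - real j' = real (j - j')" by (simp add: of_nat_diff)
  show ?thesis unfolding diff using SB[of "j - j'"] False j by simp
qed

lemma sum_swap_outer_inner:
  "(\<Sum>i\<in>A. \<Sum>r\<in>B. \<Sum>j\<in>C. \<Sum>j'\<in>D. f i r j j') = (\<Sum>j\<in>C. \<Sum>j'\<in>D. \<Sum>r\<in>B. \<Sum>i\<in>A. f i r j j')"
proof -
  have "(\<Sum>i\<in>A. \<Sum>r\<in>B. \<Sum>j\<in>C. \<Sum>j'\<in>D. f i r j j') = (\<Sum>r\<in>B. \<Sum>i\<in>A. \<Sum>j\<in>C. \<Sum>j'\<in>D. f i r j j')"
    by (rule sum.swap)
  also have "\<dots> = (\<Sum>r\<in>B. \<Sum>j\<in>C. \<Sum>i\<in>A. \<Sum>j'\<in>D. f i r j j')"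
    by (rule sum.cong[OF refl], rule sum.swap)
  also have "\<dots> = (\<Sum>r\<in>B. \<Sum>j\<in>C. \<Sum>j'\<in>D. \<Sum>i\<in>A. f i r j j')"
    by (rule sum.cong[OF refl], rule sum.cong[OF refl], rule sum.swap)
  also have "\<dots> = (\<Sum>j\<in>C. \<Sum>r\<in>B. \<Sum>j'\<in>D. \<Sum>i\<in>A. f i r j j')"
    by (rule sum.swap)
  also have "\<dots> = (\<Sum>j\<in>C. \<Sum>j'\<in>D. \<Sum>r\<in>B. \<Sum>i\<in>A. f i r j j')"
    by (rule sum.cong[OF refl], rule sum.swap)
  finally show ?thesis .
qed

lemma fejer_window_expand:
  "complex_of_real (\<Sum>i<N. \<Sum>r<R. fejer H (x i - u - real r / real L)) * of_nat (Suc H) =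
     (\<Sum>j<Suc H. \<Sum>j'<Suc H. (\<Sum>r<R. e2pi ((real j - real j') * (- u - real r / real L))) *
        (\<Sum>i<N. e2pi ((real j - real j') * x i)))"
proof -
  have split: "e2pi ((real j - real j') * (x i - u - real r / real L)) =
      e2pi ((real j - real j') * (- u - real r / real L)) * e2pi ((real j - real j') * x i)" for i r j j'
    by (simp add: e2pi_add[symmetric] algebra_simps)
  have "complex_of_real (\<Sum>i<N. \<Sum>r<R. fejer H (x i - u - real r / real L)) =
      (\<Sum>i<N. \<Sum>r<R. \<Sum>j<Suc H. \<Sum>j'<Suc H. e2pi ((real j - real j') * (x i - u - real r / real L))) / of_nat (Suc H)"
    by (simp add: of_real_fejer sum_divide_distrib)
  also have "(\<Sum>i<N. \<Sum>r<R. \<Sum>j<Suc H. \<Sum>j'<Suc H. e2pi ((real j - real j') * (x i - u - real r / real L)))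
      = (\<Sum>j<Suc H. \<Sum>j'<Suc H. \<Sum>r<R. \<Sum>i<N.
          e2pi ((real j - real j') * (- u - real r / real L)) * e2pi ((real j - real j') * x i))"
    unfolding split by (rule sum_swap_outer_inner)
  also have "\<dots> = (\<Sum>j<Suc H. \<Sum>j'<Suc H. (\<Sum>r<R. e2pi ((real j - real j') * (- u - real r / real L))) *
        (\<Sum>i<N. e2pi ((real j - real j') * x i)))"
    by (simp only: sum_product)
  finally show ?thesis by (simp only: nonzero_eq_divide_eq[OF of_nat_neq_0])
qed

lemma norm_window_times_exp_sum_le:
  assumes HL: "2 * H < L"
    and SB: "\<And>d. 1 \<le> d \<Longrightarrow> d \<le> H \<Longrightarrow> norm (\<Sum>i<N. e2pi (real d * x i)) \<le> G d"
    and j: "j < Suc H" "j' < Suc H" "j \<noteq> j'"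
  defines "D \<equiv> if j \<le> j' then j' - j else j - j'"
  shows "norm ((\<Sum>r<R. e2pi ((real j - real j') * (- u - real r / real L))) *
      (\<Sum>i<N. e2pi ((real j - real j') * x i))) \<le> real L * (G D / real D)"
proof -
  have D: "\<bar>real j - real j'\<bar> = real D" "1 \<le> D" "D \<le> H"
    using j unfolding D_def by auto
  have "norm (\<Sum>r<R. e2pi ((real j - real j') * (- u - real r / real L))) \<le> real L / real D"
    using norm_window_sum_le[where k = "real j - real j'" and L = L and R = R and v = "- u"] D HL by simp
  moreover have "norm (\<Sum>i<N. e2pi ((real j - real j') * x i)) \<le> G D"
    unfolding D_def by (rule norm_sum_e2pi_diff_le[OF SB j])
  ultimately have "norm ((\<Sum>r<R. e2pi ((real j - real j') * (- u - real r / real L))) *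
      (\<Sum>i<N. e2pi ((real j - real j') * x i))) \<le> real L / real D * G D"
    unfolding norm_mult by (intro mult_mono) auto
  then show ?thesis by simp
qed

lemma fejer_window_sum_le:
  assumes HL: "2 * H < L"
    and SB: "\<And>d. 1 \<le> d \<Longrightarrow> d \<le> H \<Longrightarrow> norm (\<Sum>i<N. e2pi (real d * x i)) \<le> G d"
  shows "(\<Sum>i<N. \<Sum>r<R. fejer H (x i - u - real r / real L)) / real L
           \<le> real N * real R / real L + 2 * (\<Sum>d\<in>{1..H}. G d / real d)"
proof -
  have L: "real L > 0" using HL by simp
  define T where "T = (\<Sum>i<N. \<Sum>r<R. fejer H (x i - u - real r / real L))"
  define D where "D j j' = (if j \<le> j' then j' - j else j - j')" for j j' :: nat
  define K where "K j j' = (\<Sum>r<R. e2pi ((real j - real j') * (- u - real r / real L))) *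
      (\<Sum>i<N. e2pi ((real j - real j') * x i))" for j j'
  define Z where "Z = (\<Sum>j<Suc H. \<Sum>j'\<in>{..<Suc H} - {j}. K j j')"
  have diag: "K j j = of_nat (R * N)" for j
    by (simp add: K_def)
  have "complex_of_real T * of_nat (Suc H) = (\<Sum>j<Suc H. \<Sum>j'<Suc H. K j j')"
    unfolding T_def K_def by (rule fejer_window_expand)
  also have "\<dots> = (\<Sum>j<Suc H. K j j + (\<Sum>j'\<in>{..<Suc H} - {j}. K j j'))"
    by (intro sum.cong refl) (rule sum.remove; simp)
  also have "\<dots> = (\<Sum>j<Suc H. K j j) + Z"
    unfolding Z_def by (rule sum.distrib)
  also have "(\<Sum>j<Suc H. K j j) = of_nat (Suc H) * of_nat (R * N)"
    by (simp only: diag sum_constant card_lessThan)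
  finally have "Z = complex_of_real T * of_nat (Suc H) - of_nat (Suc H) * of_nat (R * N)"
    by (simp only: eq_diff_eq add.commute)
  also have "\<dots> = complex_of_real ((T - real N * real R) * real (Suc H))"
    by (simp only: of_real_mult of_real_diff of_real_of_nat_eq of_nat_mult)
      (simp only: left_diff_distrib right_diff_distrib mult_ac)
  finally have "norm Z = \<bar>(T - real N * real R) * real (Suc H)\<bar>"
    by (simp only: norm_of_real)
  then have T_le: "(T - real N * real R) * real (Suc H) \<le> norm Z"
    by simp
  have G0: "0 \<le> G d" if "d \<in> {1..H}" for d
    using SB[of d] that by (auto intro: order_trans[OF norm_ge_zero])
  have K_le: "norm (K j j') \<le> real L * (G (D j j') / real (D j j'))"
    if "j < Suc H" "j' < Suc H" "j \<noteq> j'" for j j'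
    unfolding K_def D_def by (rule norm_window_times_exp_sum_le[OF HL SB that])
  have "norm Z \<le> (\<Sum>j<Suc H. \<Sum>j'\<in>{..<Suc H} - {j}. norm (K j j'))"
    unfolding Z_def by (rule order_trans[OF norm_sum sum_mono], rule norm_sum)
  also have "\<dots> \<le> (\<Sum>j<Suc H. \<Sum>j'\<in>{..<Suc H} - {j}. real L * (G (D j j') / real (D j j')))"
    by (intro sum_mono K_le) auto
  also have "\<dots> = real L * (\<Sum>j<Suc H. \<Sum>j'\<in>{..<Suc H} - {j}. G (D j j') / real (D j j'))"
    by (simp only: sum_distrib_left)
  also have "\<dots> \<le> real L * (2 * real (Suc H) * (\<Sum>d\<in>{1..H}. G d / real d))"
    unfolding D_def using L G0 by (intro mult_left_mono sum_offdiag_dist_le) auto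
  finally have "(T - real N * real R) * real (Suc H) \<le> real L * (2 * real (Suc H) * (\<Sum>d\<in>{1..H}. G d / real d))"
    using T_le by linarith
  then have "(T - real N * real R) * real (Suc H) \<le> (real L * (2 * (\<Sum>d\<in>{1..H}. G d / real d))) * real (Suc H)"
    by (simp only: mult_ac)
  then have "T - real N * real R \<le> real L * (2 * (\<Sum>d\<in>{1..H}. G d / real d))"
    by (rule mult_right_le_imp_le) simp
  then have "T / real L \<le> (real N * real R + real L * (2 * (\<Sum>d\<in>{1..H}. G d / real d))) / real L"
    using L by (intro divide_right_mono) auto
  also have "\<dots> = real N * real R / real L + 2 * (\<Sum>d\<in>{1..H}. G d / real d)"
    using L by (simp only: add_divide_distrib nonzero_mult_div_cancel_left[of "real L"] of_nat_eq_0_iff)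
  finally show ?thesis unfolding T_def .
qed

text \<open>As x - m lies \<delta> inside the window [a - \<delta>, a - \<delta> + R / L], the shifts r < R carry the
  full mass L except for the tail bounded above.\<close>

lemma fejer_window_ge:
  assumes "\<delta> > 0" "real L * \<delta> \<ge> 1" "2 * H < L" "R \<le> L" "real R \<ge> real L * (b - a + 2 * \<delta>)"
    and "m \<in> \<int>" "x - m \<in> {a..b}"
  shows "1 - 4 / (real (Suc H) * \<delta>) \<le> (\<Sum>r<R. fejer H (x - (a - \<delta>) - real r / real L)) / real L"
proof -
  have L: "real L > 0" using assms(3) by simp
  define y where "y = x - m"
  define g where "g r = fejer H (y - (a - \<delta>) - real r / real L)" for r
  have shift: "fejer H (x - (a - \<delta>) - real r / real L) = g r" for r
  proof -
    have "x - (a - \<delta>) - real r / real L = (y - (a - \<delta>) - real r / real L) + m"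
      unfolding y_def by simp
    then show ?thesis unfolding g_def by (simp only: fejer_add_Ints[OF assms(6)])
  qed
  have U: "{..<L} = {..<R} \<union> {R..<L}" using assms(4) by auto
  have "real L = (\<Sum>r<L. g r)"
    unfolding g_def using sum_fejer_shifts[OF assms(3)] by simp
  also have "\<dots> = (\<Sum>r<R. g r) + (\<Sum>r\<in>{R..<L}. g r)"
    unfolding U by (rule sum.union_disjoint) auto
  finally have "(\<Sum>r<R. g r) = real L - (\<Sum>r\<in>{R..<L}. g r)"
    by linarith
  then have "(\<Sum>r<R. g r) / real L = 1 - (\<Sum>r\<in>{R..<L}. g r) / real L"
    using L by (simp add: diff_divide_distrib)
  moreover have "(\<Sum>r\<in>{R..<L}. g r) / real L \<le> 4 / (real (Suc H) * \<delta>)"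
  proof -
    have "a \<le> y" "y \<le> b" using assms(7) unfolding y_def by auto
    moreover have "real R / real L \<ge> b - a + 2 * \<delta>" using assms(5) L by (simp add: pos_le_divide_eq mult.commute)
    ultimately show ?thesis
      unfolding g_def using assms(1,2,4) by (intro fejer_tail_sum_le)
  qed
  ultimately show ?thesis unfolding shift by linarith
qed

lemma card_near_interval_mult_le:
  assumes \<delta>: "\<delta> > 0" and L\<delta>: "real L * \<delta> \<ge> 1" and HL: "2 * H < L"
    and R: "R \<le> L" "real R \<ge> real L * (b - a + 2 * \<delta>)"
    and SB: "\<And>d. 1 \<le> d \<Longrightarrow> d \<le> H \<Longrightarrow> norm (\<Sum>i<N. e2pi (real d * x i)) \<le> G d"
  shows "real (card {i. i < N \<and> (\<exists>m\<in>\<int>. x i - m \<in> {a..b})}) * (1 - 4 / (real (Suc H) * \<delta>))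
     \<le> real N * real R / real L + 2 * (\<Sum>d\<in>{1..H}. G d / real d)"
proof -
  define C where "C = {i. i < N \<and> (\<exists>m\<in>\<int>. x i - m \<in> {a..b})}"
  define \<Phi> where "\<Phi> y = (\<Sum>r<R. fejer H (y - (a - \<delta>) - real r / real L)) / real L" for y
  have L: "real L > 0" using HL by simp
  have "real (card C) * (1 - 4 / (real (Suc H) * \<delta>)) = (\<Sum>i\<in>C. 1 - 4 / (real (Suc H) * \<delta>))"
    by simp
  also have "\<dots> \<le> (\<Sum>i\<in>C. \<Phi> (x i))"
  proof (rule sum_mono)
    fix i
    assume "i \<in> C"
    then obtain m where "m \<in> \<int>" "x i - m \<in> {a..b}" unfolding C_def by blast
    then show "1 - 4 / (real (Suc H) * \<delta>) \<le> \<Phi> (x i)"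
      unfolding \<Phi>_def using R by (intro fejer_window_ge[OF \<delta> L\<delta> HL]) auto
  qed
  also have "\<dots> \<le> (\<Sum>i<N. \<Phi> (x i))"
    unfolding C_def using L by (intro sum_mono2) (auto simp: \<Phi>_def sum_nonneg fejer_nonneg)
  also have "\<dots> \<le> real N * real R / real L + 2 * (\<Sum>d\<in>{1..H}. G d / real d)"
    unfolding \<Phi>_def sum_divide_distrib[symmetric] by (rule fejer_window_sum_le[OF HL SB])
  finally show ?thesis unfolding C_def .
qed

lemma card_near_interval_le:
  assumes \<delta>: "\<delta> > 0" and L\<delta>: "real L * \<delta> \<ge> 1" and HL: "2 * H < L" and ab: "a \<le> b"
    and SB: "\<And>d. 1 \<le> d \<Longrightarrow> d \<le> H \<Longrightarrow> norm (\<Sum>i<N. e2pi (real d * x i)) \<le> G d"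
  shows "real (card {i. i < N \<and> (\<exists>m\<in>\<int>. x i - m \<in> {a..b})})
     \<le> real N * (b - a) + 2 * real N * \<delta> + real N / real L + 4 * real N / (real (Suc H) * \<delta>)
        + 2 * (\<Sum>d\<in>{1..H}. G d / real d)"
proof -
  define C where "C = {i. i < N \<and> (\<exists>m\<in>\<int>. x i - m \<in> {a..b})}"
  define \<eta> where "\<eta> = 4 / (real (Suc H) * \<delta>)"
  define E where "E = 2 * (\<Sum>d\<in>{1..H}. G d / real d)"
  define R where "R = nat \<lceil>real L * (b - a + 2 * \<delta>)\<rceil>"
  have L: "real L > 0" using HL by simp
  have "C \<subseteq> {..<N}" unfolding C_def by auto
  then have cN: "card C \<le> N" by (metis card_lessThan card_mono finite_lessThan)
  have \<eta>0: "\<eta> \<ge> 0" unfolding \<eta>_def using \<delta> by simp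
  have "0 \<le> G d" if "d \<in> {1..H}" for d
    using SB[of d] that by (auto intro: order_trans[OF norm_ge_zero])
  then have E0: "E \<ge> 0"
    unfolding E_def by (auto intro!: sum_nonneg divide_nonneg_nonneg)
  have pos: "real L * (b - a + 2 * \<delta>) > 0" using L ab \<delta> by simp
  have R1: "real R \<ge> real L * (b - a + 2 * \<delta>)" unfolding R_def using pos by linarith
  have "real R < real L * (b - a + 2 * \<delta>) + 1" unfolding R_def using pos by linarith
  then have RL: "real R / real L \<le> b - a + 2 * \<delta> + 1 / real L" using L by (simp add: field_simps)
  have main: "real (card C) \<le> real N * (real R / real L) + E + \<eta> * real N"
  proof (cases "R \<ge> L")
    case True
    then have "1 \<le> real R / real L" using L by simp
    then have "real N * 1 \<le> real N * (real R / real L)" by (intro mult_left_mono) auto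
    moreover have "real (card C) \<le> real N" using cN by simp
    ultimately show ?thesis using E0 mult_nonneg_nonneg[OF \<eta>0, of "real N"] by linarith
  next
    case False
    then have "real (card C) * (1 - \<eta>) \<le> real N * real R / real L + E"
      unfolding C_def \<eta>_def E_def using R1 by (intro card_near_interval_mult_le[OF \<delta> L\<delta> HL _ _ SB]) auto
    moreover have "\<eta> * real (card C) \<le> \<eta> * real N" using cN \<eta>0 by (simp add: mult_left_mono)
    ultimately show ?thesis by (simp add: algebra_simps)
  qed
  have "real N * (real R / real L) \<le> real N * (b - a + 2 * \<delta> + 1 / real L)"
    using RL by (intro mult_left_mono) auto
  moreover have "real N * (b - a + 2 * \<delta> + 1 / real L) = real N * (b - a) + 2 * real N * \<delta> + real N / real L"
    by (simp add: algebra_simps)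
  moreover have "\<eta> * real N = 4 * real N / (real (Suc H) * \<delta>)"
    unfolding \<eta>_def by simp
  ultimately show ?thesis
    using main unfolding C_def E_def by linarith
qed

lemma frac_part_notin_imp_Ints_shift:
  assumes "0 \<le> a" "a \<le> b" "b \<le> 1" "frac_part y \<notin> {a..b}"
  shows "\<exists>m\<in>\<int>. y - m \<in> {b..a + 1}"
proof -
  define f where "f = y - of_int \<lfloor>y\<rfloor>"
  have f: "0 \<le> f" "f < 1" unfolding f_def by linarith+
  have f_notin: "f \<notin> {a..b}" using assms(4) unfolding f_def frac_part_def .
  show ?thesis
  proof (cases "f < a")
    case True
    have "y - (of_int \<lfloor>y\<rfloor> - 1) = f + 1" unfolding f_def by simp
    then have "y - (of_int \<lfloor>y\<rfloor> - 1) \<in> {b..a + 1}" using True f assms by simp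
    moreover have "of_int \<lfloor>y\<rfloor> - 1 \<in> (\<int> :: real set)" by (simp add: Ints_diff)
    ultimately show ?thesis by blast
  next
    case False
    then have "f \<in> {b..a + 1}" using f f_notin assms by auto
    then have "y - of_int \<lfloor>y\<rfloor> \<in> {b..a + 1}" unfolding f_def .
    moreover have "of_int \<lfloor>y\<rfloor> \<in> (\<int> :: real set)" by simp
    ultimately show ?thesis by blast
  qed
qed

text \<open>Counting points mod 1 in [a, b] from above, and in the complementary arc [b, a + 1] from above,
  bounds the discrepancy on both sides.\<close>

lemma bias_le_of_card_le:
  assumes up: "\<And>a b. a \<le> b \<Longrightarrow> real (card {i. i < N \<and> (\<exists>m\<in>\<int>. x i - m \<in> {a..b})}) \<le> real N * (b - a) + E"
  shows "bias N x \<le> E"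
  unfolding bias_def
proof (rule cSUP_least)
  show "{(a, b). 0 \<le> a \<and> a \<le> b \<and> b \<le> (1::real)} \<noteq> {}" by (auto intro!: exI[of _ 0])
next
  fix ab :: "real \<times> real"
  assume "ab \<in> {(a, b). 0 \<le> a \<and> a \<le> b \<and> b \<le> 1}"
  then obtain a b where ab: "ab = (a, b)" "0 \<le> a" "a \<le> b" "b \<le> 1" by auto
  define A where "A = {i. i < N \<and> frac_part (x i) \<in> {a..b}}"
  have AN: "A \<subseteq> {..<N}" unfolding A_def by auto
  have "A \<subseteq> {i. i < N \<and> (\<exists>m\<in>\<int>. x i - m \<in> {a..b})}"
  proof
    fix i
    assume "i \<in> A"
    then show "i \<in> {i. i < N \<and> (\<exists>m\<in>\<int>. x i - m \<in> {a..b})}"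
      unfolding A_def frac_part_def by (auto intro!: bexI[of _ "of_int \<lfloor>x i\<rfloor>"])
  qed
  then have "real (card A) \<le> real (card {i. i < N \<and> (\<exists>m\<in>\<int>. x i - m \<in> {a..b})})"
    by (intro of_nat_mono card_mono) auto
  also have "\<dots> \<le> real N * (b - a) + E" using up ab by simp
  finally have upper: "real (card A) \<le> real N * (b - a) + E" .
  have "{..<N} - A \<subseteq> {i. i < N \<and> (\<exists>m\<in>\<int>. x i - m \<in> {b..a + 1})}"
    using frac_part_notin_imp_Ints_shift[OF ab(2-4)] unfolding A_def by blast
  then have "card ({..<N} - A) \<le> card {i. i < N \<and> (\<exists>m\<in>\<int>. x i - m \<in> {b..a + 1})}"
    by (intro card_mono) auto
  then have "real (card ({..<N} - A)) \<le> real (card {i. i < N \<and> (\<exists>m\<in>\<int>. x i - m \<in> {b..a + 1})})"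
    by (rule of_nat_mono)
  also have "\<dots> \<le> real N * (a + 1 - b) + E" using up[of b "a + 1"] ab by simp
  finally have "real (card ({..<N} - A)) \<le> real N * (a + 1 - b) + E" .
  moreover have "card ({..<N} - A) = N - card A" using AN by (simp add: card_Diff_subset finite_subset)
  moreover have "card A \<le> N" using AN by (metis card_lessThan card_mono finite_lessThan)
  ultimately have "real (card A) \<ge> real N * (b - a) - E" by (simp add: of_nat_diff algebra_simps)
  with upper show "\<bar>real (card {i. i < N \<and> frac_part (x i) \<in> {fst ab..snd ab}}) - real N * (snd ab - fst ab)\<bar> \<le> E"
    unfolding A_def ab by (simp add: abs_le_iff)
qed

theorem bias_le_erdos_turan:
  assumes "\<delta> > 0" "real L * \<delta> \<ge> 1" "2 * H < L"
    and "\<And>d. 1 \<le> d \<Longrightarrow> d \<le> H \<Longrightarrow> norm (\<Sum>i<N. e2pi (real d * x i)) \<le> G d"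
  shows "bias N x \<le> 2 * real N * \<delta> + real N / real L + 4 * real N / (real (Suc H) * \<delta>)
     + 2 * (\<Sum>d\<in>{1..H}. G d / real d)"
proof (rule bias_le_of_card_le)
  fix a b :: real
  assume "a \<le> b"
  from card_near_interval_le[OF assms(1-3) this assms(4)]
  show "real (card {i. i < N \<and> (\<exists>m\<in>\<int>. x i - m \<in> {a..b})}) \<le> real N * (b - a) +
      (2 * real N * \<delta> + real N / real L + 4 * real N / (real (Suc H) * \<delta>) + 2 * (\<Sum>d\<in>{1..H}. G d / real d))"
    by linarith
qed

section \<open>The coefficients of Q_{0,3}\<close>

lemma coeff_Qpoly_Suc:
  "coeff (Qpoly p \<xi> j (Suc r)) i =
     (\<Sum>m<p. \<xi> ^ (j * m) * (if i < m * p ^ r then 0 else coeff (Qpoly p \<xi> m r) (i - m * p ^ r)))"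
  by (simp only: Qpoly.simps coeff_sum coeff_smult coeff_monom_mult mult_1_left)

lemma coeff_Qpoly_eq_0:
  assumes "p ^ r \<le> i"
  shows "coeff (Qpoly p \<xi> l r) i = 0"
  using assms
proof (induction r arbitrary: l i)
  case (Suc r)
  have "p ^ r \<le> i - m * p ^ r" if "m < p" for m
  proof -
    have "m * p ^ r + p ^ r \<le> p * p ^ r"
      using that by (metis add.commute mult_Suc mult_le_mono1 Suc_le_eq)
    then show ?thesis using Suc.prems by simp
  qed
  then show ?case
    unfolding coeff_Qpoly_Suc using Suc.IH by (intro sum.neutral) auto
qed simp

lemma mult_add_less_mult: "a < m \<Longrightarrow> b < p \<Longrightarrow> b * m + a < p * (m :: nat)"
  by (metis add_less_cancel_left less_le_trans mult_Suc mult_le_mono1 Suc_leI add.commute)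

text \<open>The recursion reads off the top base-p digit q of the index, contributing the factor \<xi>^(l q).\<close>

lemma coeff_Qpoly_Suc_digit:
  assumes "q < p" "i < p ^ r"
  shows "coeff (Qpoly p \<xi> l (Suc r)) (q * p ^ r + i) = \<xi> ^ (l * q) * coeff (Qpoly p \<xi> q r) i"
proof -
  have "coeff (Qpoly p \<xi> l (Suc r)) (q * p ^ r + i) =
      (\<Sum>m<p. if m = q then \<xi> ^ (l * q) * coeff (Qpoly p \<xi> q r) i else 0)"
    unfolding coeff_Qpoly_Suc
  proof (intro sum.cong refl)
    fix m
    assume "m \<in> {..<p}"
    consider "m < q" | "m = q" | "q < m" by linarith
    then show "\<xi> ^ (l * m) * (if q * p ^ r + i < m * p ^ r then 0 else coeff (Qpoly p \<xi> m r) (q * p ^ r + i - m * p ^ r))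
        = (if m = q then \<xi> ^ (l * q) * coeff (Qpoly p \<xi> q r) i else 0)"
    proof cases
      case 1
      then have "Suc m * p ^ r \<le> q * p ^ r" by (intro mult_le_mono1) simp
      then have "p ^ r \<le> q * p ^ r + i - m * p ^ r" by simp
      then show ?thesis using 1 coeff_Qpoly_eq_0 by simp
    next
      case 3
      then have "Suc q * p ^ r \<le> m * p ^ r" by (intro mult_le_mono1) simp
      then show ?thesis using 3 assms by simp
    qed simp
  qed
  also have "\<dots> = \<xi> ^ (l * q) * coeff (Qpoly p \<xi> q r) i"
    using assms by simp
  finally show ?thesis .
qed

lemma coeff_Qpoly_3:
  assumes "a < p" "b < p" "c < p"
  shows "coeff (Qpoly p \<xi> 0 3) (c * p\<^sup>2 + (b * p + a)) = \<xi> ^ (c * b) * \<xi> ^ (b * a)"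
proof -
  have "b * p + a < p\<^sup>2" using mult_add_less_mult[OF assms(1,2)] by (simp add: power2_eq_square)
  then have "coeff (Qpoly p \<xi> 0 3) (c * p\<^sup>2 + (b * p + a)) = coeff (Qpoly p \<xi> c 2) (b * p + a)"
    using coeff_Qpoly_Suc_digit[OF assms(3), of "b * p + a" 2 \<xi> 0]
    by (simp del: Qpoly.simps add: numeral_eq_Suc)
  also have "\<dots> = \<xi> ^ (c * b) * coeff (Qpoly p \<xi> b 1) a"
    using coeff_Qpoly_Suc_digit[OF assms(2), of a 1 \<xi> c] assms
    by (simp del: Qpoly.simps add: numeral_eq_Suc)
  also have "coeff (Qpoly p \<xi> b 1) a = \<xi> ^ (b * a)"
    using coeff_Qpoly_Suc_digit[OF assms(1), of 0 0 \<xi> b] assms by simp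
  finally show ?thesis .
qed

lemma sum_lessThan_mult_split:
  fixes f :: "nat \<Rightarrow> 'a::comm_monoid_add"
  shows "(\<Sum>j<n * k. f j) = (\<Sum>q<n. \<Sum>a<k. f (q * k + a))"
proof -
  have "(\<Sum>j<n * k. f j) = (\<Sum>q<n. sum f {q * k..<q * k + k})" by (rule sum.nat_group[symmetric])
  also have "\<dots> = (\<Sum>q<n. \<Sum>a<k. f (q * k + a))"
    using sum.shift_bounds_nat_ivl[of f 0 "q * k" k for q]
    by (simp add: add.commute atLeast0LessThan)
  finally show ?thesis .
qed

lemma sum_cube_digits:
  fixes f :: "nat \<Rightarrow> 'a::comm_monoid_add"
  shows "(\<Sum>j<p ^ 3. f j) = (\<Sum>c<p. \<Sum>b<p. \<Sum>a<p. f (c * p\<^sup>2 + (b * p + a)))"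
proof -
  have "(\<Sum>j<p ^ 3. f j) = (\<Sum>c<p. \<Sum>i<p * p. f (c * (p * p) + i))"
    using sum_lessThan_mult_split[of f p "p * p"] by (simp add: power3_eq_cube mult.assoc)
  also have "\<dots> = (\<Sum>c<p. \<Sum>b<p. \<Sum>a<p. f (c * (p * p) + (b * p + a)))"
    by (simp only: sum_lessThan_mult_split)
  finally show ?thesis by (simp add: power2_eq_square)
qed

text \<open>Factorisation of the twisted exponential sum over the digits j = a + b p + c p^2: the
  coefficient \<xi>^(c b + b a) couples a and c only through the middle digit b.\<close>

lemma Qpoly_3_twisted_sum_factor:
  "(\<Sum>j<p ^ 3. coeff (Qpoly p \<xi> 0 3) j ^ d * w ^ j) =
     (\<Sum>b<p. w ^ (b * p) * ((\<Sum>a<p. ((\<xi> ^ d) ^ b * w) ^ a) * (\<Sum>c<p. ((\<xi> ^ d) ^ b * w ^ p\<^sup>2) ^ c)))"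
proof -
  have summand: "(\<xi> ^ (c * b) * \<xi> ^ (b * a)) ^ d * w ^ (c * p\<^sup>2 + (b * p + a))
      = w ^ (b * p) * (((\<xi> ^ d) ^ b * w) ^ a * ((\<xi> ^ d) ^ b * w ^ p\<^sup>2) ^ c)" for a b c
  proof -
    have "(\<xi> ^ (c * b) * \<xi> ^ (b * a)) ^ d = (\<xi> ^ d) ^ (b * a) * (\<xi> ^ d) ^ (b * c)"
      by (simp only: power_mult_distrib power_mult[symmetric] mult_ac)
    moreover have "((\<xi> ^ d) ^ b * w) ^ a = (\<xi> ^ d) ^ (b * a) * w ^ a"
      by (simp only: power_mult_distrib power_mult)
    moreover have "((\<xi> ^ d) ^ b * w ^ p\<^sup>2) ^ c = (\<xi> ^ d) ^ (b * c) * (w ^ p\<^sup>2) ^ c"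
      by (simp only: power_mult_distrib power_mult)
    moreover have "w ^ (c * p\<^sup>2 + (b * p + a)) = w ^ (b * p) * w ^ a * (w ^ p\<^sup>2) ^ c"
      by (simp only: power_add power_mult[symmetric] mult_ac)
    ultimately show ?thesis by (simp only: mult_ac)
  qed
  have "(\<Sum>j<p ^ 3. coeff (Qpoly p \<xi> 0 3) j ^ d * w ^ j) =
      (\<Sum>c<p. \<Sum>b<p. \<Sum>a<p. w ^ (b * p) * (((\<xi> ^ d) ^ b * w) ^ a * ((\<xi> ^ d) ^ b * w ^ p\<^sup>2) ^ c))"
    unfolding sum_cube_digits by (intro sum.cong refl) (simp only: lessThan_iff coeff_Qpoly_3 summand)
  also have "\<dots> = (\<Sum>b<p. \<Sum>c<p. \<Sum>a<p. w ^ (b * p) * (((\<xi> ^ d) ^ b * w) ^ a * ((\<xi> ^ d) ^ b * w ^ p\<^sup>2) ^ c))"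
    by (rule sum.swap)
  finally show ?thesis by (simp add: sum_distrib_left sum_distrib_right mult_ac)
qed

section \<open>The exponential sums of Q_{0,3}\<close>

lemma primitive_root_of_unity_power_eq_1_iff:
  assumes "primitive_root_of_unity p \<xi>" "p > 0"
  shows "\<xi> ^ n = 1 \<longleftrightarrow> p dvd n"
proof -
  have xp: "\<xi> ^ p = 1" and prim: "\<And>k. 0 < k \<Longrightarrow> k < p \<Longrightarrow> \<xi> ^ k \<noteq> 1"
    using assms unfolding primitive_root_of_unity_def by auto
  have "\<xi> ^ n = (\<xi> ^ p) ^ (n div p) * \<xi> ^ (n mod p)"
    by (metis div_mult_mod_eq power_add power_mult mult.commute)
  then have "\<xi> ^ n = \<xi> ^ (n mod p)" using xp by simp
  moreover have "n mod p < p" using assms(2) by simp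
  ultimately show ?thesis
    using prim[of "n mod p"] by (cases "n mod p = 0") (auto simp: dvd_eq_mod_eq_0)
qed

lemma sum_root_of_unity_power:
  fixes \<zeta> :: complex
  assumes "\<And>n. \<zeta> ^ n = 1 \<longleftrightarrow> p dvd n"
  shows "(\<Sum>b<p. (\<zeta> ^ e) ^ b) = (if p dvd e then of_nat p else 0)"
proof (cases "p dvd e")
  case True
  then have "\<zeta> ^ e = 1" using assms by simp
  then show ?thesis using True by simp
next
  case False
  then have "\<zeta> ^ e \<noteq> 1" "(\<zeta> ^ e) ^ p = 1" using assms by (simp_all add: power_mult[symmetric])
  then show ?thesis using False by (simp add: sum_gp_strict)
qed

lemma dvd_add_pred_mult_iff:
  fixes a a' p :: nat
  assumes "a < p" "a' < p"
  shows "p dvd (a + (p - 1) * a') \<longleftrightarrow> a = a'"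
proof
  assume "a = a'"
  then have "a + (p - 1) * a' = p * a'" using assms by (cases p) auto
  then show "p dvd (a + (p - 1) * a')" by simp
next
  assume "p dvd (a + (p - 1) * a')"
  then obtain k where k: "a + (p - 1) * a' = p * k" by blast
  have e: "a + p * a' = p * k + a'" using k assms by (cases p) (auto simp: algebra_simps)
  have "a = (a + p * a') mod p" using assms by simp
  also have "\<dots> = (p * k + a') mod p" by (simp only: e)
  also have "\<dots> = a'" using assms by simp
  finally show "a = a'" .
qed

text \<open>Parseval's identity over the p-th roots of unity \<zeta>^b.\<close>

lemma sum_norm_geometric_sum_roots_of_unity:
  fixes \<zeta> v :: complex
  assumes p: "p > 0" and ord: "\<And>n. \<zeta> ^ n = 1 \<longleftrightarrow> p dvd n" and v: "norm v = 1"
  shows "(\<Sum>b<p. (norm (\<Sum>a<p. (\<zeta> ^ b * v) ^ a))\<^sup>2) = real p ^ 2"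
proof -
  have unit: "z * cnj z = 1" if "norm z = 1" for z :: complex
    using complex_norm_square[of z] that by simp
  have zp: "\<zeta> ^ p = 1" using ord by simp
  then have "norm \<zeta> ^ p = 1 ^ p" by (simp add: norm_power[symmetric])
  then have nz: "norm \<zeta> = 1" using p by (subst (asm) power_eq_iff_eq_base) auto
  have "\<zeta> * cnj \<zeta> = \<zeta> * \<zeta> ^ (p - 1)"
    using unit[OF nz] zp p by (metis Suc_diff_1 power_Suc)
  moreover have "\<zeta> \<noteq> 0" using nz by auto
  ultimately have cz: "cnj \<zeta> = \<zeta> ^ (p - 1)" by simp
  have summand: "(\<zeta> ^ b * v) ^ a * cnj ((\<zeta> ^ b * v) ^ a') = (v ^ a * cnj v ^ a') * (\<zeta> ^ (a + (p - 1) * a')) ^ b"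
    for a a' b :: nat
  proof -
    have "(\<zeta> ^ b * v) ^ a * cnj ((\<zeta> ^ b * v) ^ a') = \<zeta> ^ (b * a) * \<zeta> ^ ((p - 1) * (b * a')) * (v ^ a * cnj v ^ a')"
      by (simp add: cz power_mult_distrib power_mult[symmetric] mult_ac)
    also have "\<zeta> ^ (b * a) * \<zeta> ^ ((p - 1) * (b * a')) = (\<zeta> ^ (a + (p - 1) * a')) ^ b"
      by (simp add: power_add[symmetric] power_mult[symmetric] algebra_simps)
    finally show ?thesis by (simp add: mult_ac)
  qed
  have unit_power: "v ^ n * cnj v ^ n = 1" for n
    using unit[OF v] by (simp flip: power_mult_distrib)
  have inner: "(\<Sum>b<p. (v ^ a * cnj v ^ a') * (\<zeta> ^ (a + (p - 1) * a')) ^ b) = (if a' = a then of_nat p else 0)"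
    if "a < p" "a' < p" for a a'
  proof -
    have "(\<Sum>b<p. (v ^ a * cnj v ^ a') * (\<zeta> ^ (a + (p - 1) * a')) ^ b)
        = (v ^ a * cnj v ^ a') * (\<Sum>b<p. (\<zeta> ^ (a + (p - 1) * a')) ^ b)"
      by (simp only: sum_distrib_left)
    also have "\<dots> = (v ^ a * cnj v ^ a') * (if a = a' then of_nat p else 0)"
      using sum_root_of_unity_power[OF ord, of "a + (p - 1) * a'"] dvd_add_pred_mult_iff[OF that]
      by simp
    also have "\<dots> = (if a' = a then of_nat p else 0)"
      using unit_power by (cases "a = a'") auto
    finally show ?thesis .
  qed
  have "complex_of_real (\<Sum>b<p. (norm (\<Sum>a<p. (\<zeta> ^ b * v) ^ a))\<^sup>2)
      = (\<Sum>b<p. \<Sum>a<p. \<Sum>a'<p. (v ^ a * cnj v ^ a') * (\<zeta> ^ (a + (p - 1) * a')) ^ b)"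
    by (simp only: of_real_sum complex_norm_square cnj_sum sum_product summand)
  also have "\<dots> = (\<Sum>a<p. \<Sum>b<p. \<Sum>a'<p. (v ^ a * cnj v ^ a') * (\<zeta> ^ (a + (p - 1) * a')) ^ b)"
    by (rule sum.swap)
  also have "\<dots> = (\<Sum>a<p. \<Sum>a'<p. \<Sum>b<p. (v ^ a * cnj v ^ a') * (\<zeta> ^ (a + (p - 1) * a')) ^ b)"
    by (rule sum.cong[OF refl], rule sum.swap)
  also have "\<dots> = (\<Sum>a<p. \<Sum>a'<p. if a' = a then of_nat p else 0)"
    by (intro sum.cong refl) (rule inner; simp)
  also have "\<dots> = of_nat p * of_nat p"
    by simp
  finally have "complex_of_real (\<Sum>b<p. (norm (\<Sum>a<p. (\<zeta> ^ b * v) ^ a))\<^sup>2) = complex_of_real (real p ^ 2)"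
    by (simp add: power2_eq_square)
  then show ?thesis by (simp only: of_real_eq_iff)
qed

lemma norm_Qpoly_3_twisted_sum_le:
  assumes "prime p" "primitive_root_of_unity p \<xi>" "\<not> p dvd d" "norm w = 1"
  shows "norm (\<Sum>j<p ^ 3. coeff (Qpoly p \<xi> 0 3) j ^ d * w ^ j) \<le> real p ^ 2"
proof -
  have p: "p > 0" using assms(1) prime_gt_0_nat by blast
  have ord: "((\<xi> ^ d) ^ n = 1) \<longleftrightarrow> p dvd n" for n
    using primitive_root_of_unity_power_eq_1_iff[OF assms(2) p, of "d * n"] assms(1,3)
    by (simp add: power_mult prime_dvd_mult_iff)
  define A where "A b = (\<Sum>a<p. ((\<xi> ^ d) ^ b * w) ^ a)" for b
  define C where "C b = (\<Sum>c<p. ((\<xi> ^ d) ^ b * w ^ p\<^sup>2) ^ c)" for b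
  have "norm (\<Sum>j<p ^ 3. coeff (Qpoly p \<xi> 0 3) j ^ d * w ^ j) = norm (\<Sum>b<p. w ^ (b * p) * (A b * C b))"
    unfolding Qpoly_3_twisted_sum_factor A_def C_def ..
  also have "\<dots> \<le> (\<Sum>b<p. norm (A b) * norm (C b))"
    using norm_sum[of "\<lambda>b. w ^ (b * p) * (A b * C b)"] assms(4) by (simp add: norm_mult norm_power)
  also have "\<dots> \<le> (\<Sum>b<p. ((norm (A b))\<^sup>2 + (norm (C b))\<^sup>2) / 2)"
  proof (rule sum_mono)
    fix b
    show "norm (A b) * norm (C b) \<le> ((norm (A b))\<^sup>2 + (norm (C b))\<^sup>2) / 2"
      using sum_squares_bound[of "norm (A b)" "norm (C b)"] by simp
  qed
  also have "\<dots> = ((\<Sum>b<p. (norm (A b))\<^sup>2) + (\<Sum>b<p. (norm (C b))\<^sup>2)) / 2"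
    by (simp only: sum_divide_distrib[symmetric] sum.distrib)
  also have "\<dots> = real p ^ 2"
    unfolding A_def C_def using assms(4)
    by (simp add: sum_norm_geometric_sum_roots_of_unity[OF p ord] norm_power)
  finally show ?thesis .
qed

lemma norm_Qpoly_exp_sum_le:
  assumes "prime p" "primitive_root_of_unity p \<xi>" "\<not> p dvd d"
    and "\<forall>j < p ^ 3. coeff (Qpoly p \<xi> 0 3) j = exp (2 * pi * \<i> * complex_of_real (s j))"
  shows "norm (\<Sum>j<p ^ 3. e2pi (real d * (s j + real j * t))) \<le> real p ^ 2"
proof -
  have "e2pi (real d * (s j + real j * t)) = coeff (Qpoly p \<xi> 0 3) j ^ d * (e2pi t ^ d) ^ j"
    if "j < p ^ 3" for j
  proof -
    have "e2pi (s j) = coeff (Qpoly p \<xi> 0 3) j"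
      using assms(4) that by (simp add: e2pi_def cis_conv_exp mult_ac)
    have "e2pi (real d * (s j + real j * t)) = (e2pi (s j) * e2pi t ^ j) ^ d"
      by (simp add: e2pi_power e2pi_add[symmetric] algebra_simps)
    then show ?thesis
      using \<open>e2pi (s j) = _\<close> by (simp add: power_mult_distrib power_mult[symmetric] mult.commute)
  qed
  then have "(\<Sum>j<p ^ 3. e2pi (real d * (s j + real j * t))) = (\<Sum>j<p ^ 3. coeff (Qpoly p \<xi> 0 3) j ^ d * (e2pi t ^ d) ^ j)"
    by simp
  then show ?thesis
    using norm_Qpoly_3_twisted_sum_le[OF assms(1-3), of "e2pi t ^ d"] by (simp add: norm_power)
qed

lemma sum_multiples_atLeastAtMost:
  fixes f :: "nat \<Rightarrow> real"
  assumes "p > 0"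
  shows "(\<Sum>d\<in>{1..p * m}. if p dvd d then f d else 0) = (\<Sum>k\<in>{1..m}. f (p * k))"
proof -
  have "{d\<in>{1..p * m}. p dvd d} = (\<lambda>k. p * k) ` {1..m}"
    using assms by (auto simp: Suc_le_eq elim!: dvdE)
  then have "(\<Sum>d\<in>{1..p * m}. if p dvd d then f d else 0) = (\<Sum>d\<in>(\<lambda>k. p * k) ` {1..m}. f d)"
    by (simp flip: sum.inter_filter)
  also have "\<dots> = (\<Sum>k\<in>{1..m}. f (p * k))"
    using assms by (subst sum.reindex) (auto simp: inj_on_def)
  finally show ?thesis .
qed

lemma harm_le_one_plus_ln: "1 \<le> n \<Longrightarrow> harm n \<le> 1 + ln (real n)"
  using euler_mascheroni_sequence_decreasing[of 1 n] by (simp add: harm_def)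

text \<open>The weights: p^3 is the trivial bound for p | d, and p^2 the bound from the factorisation.\<close>

lemma sum_erdos_turan_weights_le:
  fixes p :: nat
  assumes "p \<ge> 2"
  shows "(\<Sum>d\<in>{1..p\<^sup>2}. (if p dvd d then real p ^ 3 else real p ^ 2) / real d)
     \<le> real p ^ 2 * (2 + 3 * ln (real p))"
proof -
  have p: "p > 0" using assms by simp
  have harm: "(\<Sum>d\<in>{1..n}. 1 / real d) \<le> 1 + ln (real n)" if "1 \<le> n" for n
    using harm_le_one_plus_ln[OF that] by (simp add: harm_def divide_inverse)
  have "(\<Sum>d\<in>{1..p\<^sup>2}. (if p dvd d then real p ^ 3 else real p ^ 2) / real d)
     \<le> (\<Sum>d\<in>{1..p\<^sup>2}. real p ^ 2 * (1 / real d) + (if p dvd d then real p ^ 3 / real d else 0))"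
  proof (intro sum_mono)
    fix d
    have "real p ^ 2 \<le> real p ^ 3" using p by (intro power_increasing) auto
    then show "(if p dvd d then real p ^ 3 else real p ^ 2) / real d
        \<le> real p ^ 2 * (1 / real d) + (if p dvd d then real p ^ 3 / real d else 0)"
      by (auto simp: divide_nonneg_nonneg)
  qed
  also have "\<dots> = real p ^ 2 * (\<Sum>d\<in>{1..p\<^sup>2}. 1 / real d) + (\<Sum>k\<in>{1..p}. real p ^ 3 / real (p * k))"
    using sum_multiples_atLeastAtMost[OF p, of "\<lambda>d. real p ^ 3 / real d" p]
    by (simp add: sum.distrib sum_distrib_left power2_eq_square)
  also have "(\<Sum>k\<in>{1..p}. real p ^ 3 / real (p * k)) = real p ^ 2 * (\<Sum>k\<in>{1..p}. 1 / real k)"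
    unfolding sum_distrib_left using p by (intro sum.cong refl) (simp add: power3_eq_cube power2_eq_square)
  also have "real p ^ 2 * (\<Sum>d\<in>{1..p\<^sup>2}. 1 / real d) + real p ^ 2 * (\<Sum>k\<in>{1..p}. 1 / real k)
      \<le> real p ^ 2 * (1 + ln (real (p\<^sup>2))) + real p ^ 2 * (1 + ln (real p))"
    using harm[of "p\<^sup>2"] harm[of p] p by (intro add_mono mult_left_mono) auto
  also have "ln (real (p\<^sup>2)) = 2 * ln (real p)" by (simp add: ln_realpow)
  finally show ?thesis by (simp add: algebra_simps)
qed

lemma erdos_turan_error_le:
  fixes p :: nat
  assumes p2: "p \<ge> 2"
  shows "2 * real (p ^ 3) * (1 / real p) + real (p ^ 3) / real (2 * p\<^sup>2 + 1)
      + 4 * real (p ^ 3) / (real (Suc (p\<^sup>2)) * (1 / real p))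
      + 2 * (\<Sum>d\<in>{1..p\<^sup>2}. (if p dvd d then real p ^ 3 else real p ^ 2) / real d)
    \<le> 30 * real p ^ 2 * ln (real p)"
proof -
  have rp: "real p \<ge> 2" using p2 by simp
  have pp: "real p \<le> real p ^ 2" using rp by (simp add: power2_eq_square)
  have "2 * real (p ^ 3) * (1 / real p) = 2 * real p ^ 2"
    using rp by (simp add: power3_eq_cube power2_eq_square)
  moreover have "real (p ^ 3) / real (2 * p\<^sup>2 + 1) \<le> real p ^ 2"
  proof -
    have "real (p ^ 3) = real p ^ 2 * real p" by (simp add: power3_eq_cube power2_eq_square)
    also have "\<dots> \<le> real p ^ 2 * real (2 * p\<^sup>2 + 1)"
    proof (rule mult_left_mono)
      have "real (2 * p\<^sup>2 + 1) = 2 * real p ^ 2 + 1" by simp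
      then show "real p \<le> real (2 * p\<^sup>2 + 1)" using pp by linarith
    qed simp
    finally show ?thesis by (subst pos_divide_le_eq) (auto intro!: add_pos_nonneg)
  qed
  moreover have "4 * real (p ^ 3) / (real (Suc (p\<^sup>2)) * (1 / real p)) \<le> 4 * real p ^ 2"
  proof -
    have "4 * real (p ^ 3) / (real (Suc (p\<^sup>2)) * (1 / real p)) = 4 * real p ^ 4 / (real p ^ 2 + 1)"
      using rp by (simp add: field_simps eval_nat_numeral)
    also have "\<dots> \<le> 4 * real p ^ 4 / real p ^ 2"
      using rp by (intro divide_left_mono mult_pos_pos add_pos_pos) auto
    also have "\<dots> = 4 * real p ^ 2"
      using rp by (simp add: field_simps eval_nat_numeral)
    finally show ?thesis .
  qed
  moreover have "(\<Sum>d\<in>{1..p\<^sup>2}. (if p dvd d then real p ^ 3 else real p ^ 2) / real d)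
      \<le> real p ^ 2 * (2 + 3 * ln (real p))"
    by (rule sum_erdos_turan_weights_le[OF p2])
  moreover have "real p ^ 2 * (11 + 6 * ln (real p)) \<le> 30 * real p ^ 2 * ln (real p)"
  proof -
    have "ln 2 \<le> ln (real p)" using rp by simp
    then have "2 / 3 \<le> ln (real p)" using ln2_ge_two_thirds by linarith
    then have "real p ^ 2 * (11 + 6 * ln (real p)) \<le> real p ^ 2 * (30 * ln (real p))"
      by (intro mult_left_mono) auto
    then show ?thesis by (simp only: mult_ac)
  qed
  moreover have "real p ^ 2 * (11 + 6 * ln (real p)) = 7 * real p ^ 2 + 2 * (real p ^ 2 * (2 + 3 * ln (real p)))"
    by (simp add: algebra_simps)
  ultimately show ?thesis by linarith
qed

lemma bias_Qpoly_3_le: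
  assumes p: "prime p" and \<xi>: "primitive_root_of_unity p \<xi>"
    and s: "\<forall>j < p ^ 3. coeff (Qpoly p \<xi> 0 3) j = exp (2 * pi * \<i> * complex_of_real (s j))"
  shows "bias (p ^ 3) (\<lambda>j. s j + real j * t) \<le> 30 * real p ^ 2 * ln (real p)"
proof -
  have p2: "p \<ge> 2" and rp: "real p \<ge> 2" using prime_ge_2_nat[OF p] by auto
  define G where "G d = (if p dvd d then real p ^ 3 else real p ^ 2)" for d :: nat
  have G: "norm (\<Sum>j<p ^ 3. e2pi (real d * (s j + real j * t))) \<le> G d" for d
  proof (cases "p dvd d")
    case True
    have "norm (\<Sum>j<p ^ 3. e2pi (real d * (s j + real j * t))) \<le> (\<Sum>j<p ^ 3. norm (e2pi (real d * (s j + real j * t))))"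
      by (rule norm_sum)
    then show ?thesis unfolding G_def using True by simp
  qed (simp add: G_def norm_Qpoly_exp_sum_le[OF p \<xi> _ s])
  have "bias (p ^ 3) (\<lambda>j. s j + real j * t) \<le> 2 * real (p ^ 3) * (1 / real p) + real (p ^ 3) / real (2 * p\<^sup>2 + 1)
      + 4 * real (p ^ 3) / (real (Suc (p\<^sup>2)) * (1 / real p)) + 2 * (\<Sum>d\<in>{1..p\<^sup>2}. G d / real d)"
  proof (rule bias_le_erdos_turan[OF _ _ _ G])
    have "real p \<le> real p ^ 2" using rp by (simp add: power2_eq_square)
    then have "real p \<le> 1 + 2 * real p ^ 2" by linarith
    then show "1 \<le> real (2 * p\<^sup>2 + 1) * (1 / real p)" using rp by (simp add: field_simps)
  qed (use rp in auto)
  also have "\<dots> \<le> 30 * real p ^ 2 * ln (real p)"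
    unfolding G_def by (rule erdos_turan_error_le[OF p2])
  finally show ?thesis .
qed

theorem corollary4p4:
  shows "\<exists>C>0. \<forall>(p::nat) (\<xi>::complex) (s::nat \<Rightarrow> real) (t::real).
    prime p \<longrightarrow> primitive_root_of_unity p \<xi> \<longrightarrow>
    (\<forall>j < p ^ 3. 0 \<le> s j \<and> s j < 1 \<and>
        coeff (Qpoly p \<xi> 0 3) j = exp (2 * pi * \<i> * complex_of_real (s j))) \<longrightarrow>
    bias (p ^ 3) (\<lambda>j. s j + real j * t) \<le> C * real (p ^ 3) powr (2/3) * ln (real (p ^ 3))"
proof (intro exI[of _ 10] conjI allI impI)
  fix p :: nat and \<xi> :: complex and s :: "nat \<Rightarrow> real" and t :: real
  assume p: "prime p" and \<xi>: "primitive_root_of_unity p \<xi>"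
    and s: "\<forall>j < p ^ 3. 0 \<le> s j \<and> s j < 1 \<and>
        coeff (Qpoly p \<xi> 0 3) j = exp (2 * pi * \<i> * complex_of_real (s j))"
  have s': "\<forall>j < p ^ 3. coeff (Qpoly p \<xi> 0 3) j = exp (2 * pi * \<i> * complex_of_real (s j))"
    using s by blast
  have rp: "real p > 0" using prime_gt_0_nat[OF p] by simp
  have "real (p ^ 3) powr (2/3) = (real p powr 3) powr (2/3)" using rp by (simp add: powr_realpow)
  also have "\<dots> = real p powr 2" by (subst powr_powr) simp
  also have "\<dots> = real p ^ 2" using rp by (simp add: powr_realpow)
  finally have rhs: "10 * real (p ^ 3) powr (2/3) * ln (real (p ^ 3)) = 30 * real p ^ 2 * ln (real p)"
    by (simp add: ln_realpow)
  show "bias (p ^ 3) (\<lambda>j. s j + real j * t) \<le> 10 * real (p ^ 3) powr (2/3) * ln (real (p ^ 3))"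
    unfolding rhs by (rule bias_Qpoly_3_le[OF p \<xi> s'])
qed simp

end
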